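(* Let $X$ be a compact metric space and $f\colon X\to X$ an $n$-expansive homeomorphism with the shadowing property. Then $CR(f)=\overline{Per(f)}$.
   Context: $f$ is $n$-expansive if there is $c>0$ such that for every $x\in X$ the set $\{y: d(f^k(y),f^k(x))\leq c \ \forall k\in\mathbb{Z}\}$ has at most $n$ points. $f$ has the shadowing property if for every $\varepsilon>0$ there is $\delta>0$ such that for every $(x_k)_{k\in\mathbb{Z}}$ with $d(f(x_k),x_{k+1})<\delta$ for all $k$ there is $y$ with $d(f^k(y),x_k)<\varepsilon$ for all $k$. $Per(f)$ is the set of periodic points. A finite $\varepsilon$-pseudo orbit is $(x_k)_{k=0}^l$ with $d(f(x_k),x_{k+1})<\varepsilon$; $x$ is chain recurrent if for each $\varepsilon>0$ there is a nontrivial finite $\varepsilon$-pseudo orbit starting and ending at $x$; $CR(f)$ is the set of chain recurrent points. *)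

theory Defs
  imports "HOL-Analysis.Analysis"
begin

definition ziter :: "'a set \<Rightarrow> ('a \<Rightarrow> 'a) \<Rightarrow> int \<Rightarrow> 'a \<Rightarrow> 'a" where
  "ziter X f k = (if k \<ge> 0 then f ^^ nat k else (inv_into X f) ^^ nat (- k))"

definition n_expansive :: "'a::metric_space set \<Rightarrow> ('a \<Rightarrow> 'a) \<Rightarrow> nat \<Rightarrow> bool" where
  "n_expansive X f n \<longleftrightarrow> (\<exists>c>0. \<forall>x\<in>X.
     finite {y\<in>X. \<forall>k::int. dist (ziter X f k y) (ziter X f k x) \<le> c} \<and>
     card {y\<in>X. \<forall>k::int. dist (ziter X f k y) (ziter X f k x) \<le> c} \<le> n)"

definition shadowing :: "'a::metric_space set \<Rightarrow> ('a \<Rightarrow> 'a) \<Rightarrow> bool" where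
  "shadowing X f \<longleftrightarrow> (\<forall>e>0. \<exists>d>0. \<forall>xs::int \<Rightarrow> 'a.
     (\<forall>k. xs k \<in> X) \<and> (\<forall>k. dist (f (xs k)) (xs (k + 1)) < d) \<longrightarrow>
     (\<exists>y\<in>X. \<forall>k. dist (ziter X f k y) (xs k) < e))"

definition Per :: "'a set \<Rightarrow> ('a \<Rightarrow> 'a) \<Rightarrow> 'a set" where
  "Per X f = {x\<in>X. \<exists>p>0. (f ^^ p) x = x}"

definition CR :: "'a::metric_space set \<Rightarrow> ('a \<Rightarrow> 'a) \<Rightarrow> 'a set" where
  "CR X f = {x\<in>X. \<forall>e>0. \<exists>l>0. \<exists>xs::nat \<Rightarrow> 'a.
     (\<forall>i\<le>l. xs i \<in> X) \<and> xs 0 = x \<and> xs l = x \<and>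
     (\<forall>i<l. dist (f (xs i)) (xs (i + 1)) < e)}"

end

theory Submission
  imports Defs
begin

(*
  A chain recurrent point x has, for every d, a closed d-chain through it; repeated
  periodically, this is a bi-infinite d-pseudo-orbit of some period l, shadowed within e by
  a point y.  Then every iterate f^(j*l) y stays within 2e of the orbit of y at all times, so
  for 2e below the expansivity constant these iterates form a finite set, and injectivity
  of f forces y to be periodic.  Conversely, periodic points are chain recurrent and, for
  continuous f on closed X, the chain recurrent set is closed.
*)

lemma ziter_apply:
  assumes "inj_on f X" "y \<in> X"
  shows "ziter X f k (f y) = ziter X f (k + 1) y"
proof (cases "k \<ge> 0")
  case True
  then have "nat (k + 1) = Suc (nat k)" by simp
  with True show ?thesis by (simp add: ziter_def funpow_swap1)
next
  case False
  have inv_f: "inv_into X f (f y) = y" using assms by simp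
  show ?thesis
  proof (cases "k = -1")
    case True
    then show ?thesis using inv_f by (simp add: ziter_def)
  next
    case False
    with \<open>\<not> k \<ge> 0\<close> have "nat (- k) = Suc (nat (- (k + 1)))" "\<not> k + 1 \<ge> 0" by auto
    with \<open>\<not> k \<ge> 0\<close> show ?thesis
      unfolding ziter_def by (simp only: if_False funpow_Suc_right o_apply inv_f)
  qed
qed

lemma ziter_funpow:
  assumes "bij_betw f X X" "y \<in> X"
  shows "ziter X f k ((f ^^ m) y) = ziter X f (k + int m) y"
proof (induction m arbitrary: k)
  case 0
  then show ?case by simp
next
  case (Suc m)
  have "(f ^^ m) y \<in> X" using bij_betw_apply[OF bij_betw_funpow[OF assms(1)] assms(2)] .
  then have "ziter X f k ((f ^^ Suc m) y) = ziter X f (k + 1) ((f ^^ m) y)"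
    using ziter_apply bij_betw_imp_inj_on[OF assms(1)] by simp
  also have "\<dots> = ziter X f (k + int (Suc m)) y"
    using Suc.IH[of "k + 1"] by (simp add: add.assoc)
  finally show ?case .
qed

definition pseudo_orbit_loop ::
    "'a::metric_space set \<Rightarrow> ('a \<Rightarrow> 'a) \<Rightarrow> real \<Rightarrow> 'a \<Rightarrow> bool" where
  "pseudo_orbit_loop X f e x \<longleftrightarrow> (\<exists>l>0. \<exists>xs::nat \<Rightarrow> 'a.
     (\<forall>i\<le>l. xs i \<in> X) \<and> xs 0 = x \<and> xs l = x \<and>
     (\<forall>i<l. dist (f (xs i)) (xs (i + 1)) < e))"

lemma CR_iff: "x \<in> CR X f \<longleftrightarrow> x \<in> X \<and> (\<forall>e>0. pseudo_orbit_loop X f e x)"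
  by (simp add: CR_def pseudo_orbit_loop_def)

lemma pseudo_orbit_loop_move_base:
  assumes loop: "pseudo_orbit_loop X f e p" and "x \<in> X"
    and near: "dist p x < r" "dist (f p) (f x) < r"
  shows "pseudo_orbit_loop X f (e + 2 * r) x"
proof -
  obtain l :: nat and xs where l: "l > 0" "\<forall>i\<le>l. xs i \<in> X" "xs 0 = p" "xs l = p"
    and steps: "\<forall>i<l. dist (f (xs i)) (xs (i + 1)) < e"
    using loop unfolding pseudo_orbit_loop_def by blast
  define ys where "ys i = (if i = 0 \<or> i = l then x else xs i)" for i
  have "r > 0" using near(1) zero_le_dist[of p x] by linarith
  then have ys_near: "dist (xs i) (ys i) < r" "dist (f (ys i)) (f (xs i)) < r" for i
    using near l(3,4) by (auto simp: ys_def dist_commute)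
  have "dist (f (ys i)) (ys (i + 1)) < e + 2 * r" if "i < l" for i
  proof -
    have "dist (f (ys i)) (ys (i + 1))
        \<le> dist (f (ys i)) (f (xs i)) + dist (f (xs i)) (xs (i + 1)) + dist (xs (i + 1)) (ys (i + 1))"
      using dist_triangle[of "f (ys i)" "ys (i + 1)" "f (xs i)"]
        dist_triangle[of "f (xs i)" "ys (i + 1)" "xs (i + 1)"] by linarith
    with ys_near[of i] ys_near[of "i + 1"] steps[rule_format, OF that] show ?thesis by linarith
  qed
  moreover have "\<forall>i\<le>l. ys i \<in> X" "ys 0 = x" "ys l = x"
    using l(2) \<open>x \<in> X\<close> by (simp_all add: ys_def)
  ultimately show ?thesis
    unfolding pseudo_orbit_loop_def using l(1) by blast
qed

lemma Per_subset_CR: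
  assumes "f ` X \<subseteq> X"
  shows "Per X f \<subseteq> CR X f"
proof
  fix p assume "p \<in> Per X f"
  then obtain q where q: "q > 0" "(f ^^ q) p = p" and "p \<in> X" unfolding Per_def by blast
  have "(f ^^ i) p \<in> X" for i
    using \<open>p \<in> X\<close> assms by (induction i) auto
  then have "pseudo_orbit_loop X f e p" if "e > 0" for e
    unfolding pseudo_orbit_loop_def using q that
    by (intro exI[of _ q] conjI exI[of _ "\<lambda>i. (f ^^ i) p"]) auto
  with \<open>p \<in> X\<close> show "p \<in> CR X f" by (simp add: CR_iff)
qed

lemma closed_CR:
  assumes "closed X" "continuous_on X f"
  shows "closed (CR X f)"
proof -
  have "x \<in> CR X f" if x: "x \<in> closure (CR X f)" for x
  proof -
    have "x \<in> X"
      using x closure_minimal[of "CR X f" X] assms(1) by (auto simp: CR_def)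
    moreover have "pseudo_orbit_loop X f e x" if "e > 0" for e
    proof -
      have "e / 4 > 0" using \<open>e > 0\<close> by simp
      then obtain \<eta> where \<eta>: "\<eta> > 0" "\<forall>x'\<in>X. dist x' x < \<eta> \<longrightarrow> dist (f x') (f x) < e / 4"
        using assms(2) \<open>x \<in> X\<close> unfolding continuous_on_iff by blast
      with \<open>e / 4 > 0\<close> obtain p where "p \<in> CR X f" "dist p x < min \<eta> (e / 4)"
        using x unfolding closure_approachable by (metis min_less_iff_conj)
      then have "pseudo_orbit_loop X f (e / 2) p" "dist p x < e / 4" "dist (f p) (f x) < e / 4"
        using \<eta> \<open>e > 0\<close> by (auto simp: CR_iff)
      from pseudo_orbit_loop_move_base[OF this(1) \<open>x \<in> X\<close> this(2,3)] show ?thesis by simp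
    qed
    ultimately show ?thesis by (simp add: CR_iff)
  qed
  then show ?thesis using closure_subset_eq by blast
qed

lemma pseudo_orbit_loop_periodic_extension:
  fixes X :: "'a::metric_space set"
  assumes "pseudo_orbit_loop X f d x"
  obtains l :: nat and xs :: "int \<Rightarrow> 'a" where "l > 0" "\<forall>k. xs k \<in> X"
    "\<forall>k. dist (f (xs k)) (xs (k + 1)) < d" "xs 0 = x" "\<forall>k j. xs (k + int (j * l)) = xs k"
proof -
  obtain l :: nat and cs where l: "l > 0" "\<forall>i\<le>l. cs i \<in> X" "cs 0 = x" "cs l = x"
    and steps: "\<forall>i<l. dist (f (cs i)) (cs (i + 1)) < d"
    using assms unfolding pseudo_orbit_loop_def by blast
  define xs where "xs k = cs (nat (k mod int l))" for k
  have "xs k \<in> X" for k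
    using l(1,2) by (simp add: xs_def nat_le_iff less_imp_le)
  moreover have "dist (f (xs k)) (xs (k + 1)) < d" for k
  proof -
    define r where "r = k mod int l"
    have r: "0 \<le> r" "r < int l" using l(1) by (auto simp: r_def)
    have next_mod: "(k + 1) mod int l = (r + 1) mod int l" by (simp add: r_def mod_add_left_eq)
    show ?thesis
    proof (cases "r + 1 < int l")
      case True
      with next_mod r have "xs (k + 1) = cs (nat r + 1)" by (simp add: xs_def nat_add_distrib)
      with steps r show ?thesis by (simp add: xs_def r_def[symmetric] nat_less_iff)
    next
      case False
      with r have "r + 1 = int l" "nat r + 1 = l" by linarith+
      with next_mod have "xs (k + 1) = cs (nat r + 1)"
        using l(3,4) by (simp add: xs_def)
      with steps[rule_format, of "nat r"] \<open>nat r + 1 = l\<close> show ?thesis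
        by (simp add: xs_def r_def[symmetric])
    qed
  qed
  moreover have "xs 0 = x" using l(3) by (simp add: xs_def)
  moreover have "\<forall>k j. xs (k + int (j * l)) = xs k" by (simp add: xs_def)
  ultimately show ?thesis using that l(1) by blast
qed

definition dyn_cball ::
    "'a::metric_space set \<Rightarrow> ('a \<Rightarrow> 'a) \<Rightarrow> real \<Rightarrow> 'a \<Rightarrow> 'a set" where
  "dyn_cball X f c x = {y\<in>X. \<forall>k::int. dist (ziter X f k y) (ziter X f k x) \<le> c}"

lemma n_expansive_finite_dyn_cball:
  assumes "n_expansive X f n"
  obtains c where "c > 0" "\<forall>x\<in>X. finite (dyn_cball X f c x)"
  using assms unfolding n_expansive_def dyn_cball_def by blast

lemma shadow_of_periodic_in_dyn_cball:
  assumes "bij_betw f X X" "y \<in> X" and shadow: "\<forall>k. dist (ziter X f k y) (xs k) < e"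
    and period: "\<forall>k. xs (k + int m) = xs k"
  shows "(f ^^ m) y \<in> dyn_cball X f (2 * e) y"
proof -
  have "dist (ziter X f k ((f ^^ m) y)) (ziter X f k y) \<le> 2 * e" for k
  proof -
    have "dist (ziter X f k ((f ^^ m) y)) (xs k) < e"
      using shadow[rule_format, of "k + int m"] period ziter_funpow[OF assms(1,2)] by simp
    with shadow show ?thesis by (smt (verit) dist_commute dist_triangle)
  qed
  moreover have "(f ^^ m) y \<in> X" using bij_betw_apply[OF bij_betw_funpow[OF assms(1)] assms(2)] .
  ultimately show ?thesis by (simp add: dyn_cball_def)
qed

lemma periodic_if_finite_orbit:
  assumes g: "bij_betw g X X" and "y \<in> X" and fin: "finite (range (\<lambda>j. (g ^^ j) y))"
  obtains p where "p > 0" "(g ^^ p) y = y"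
proof -
  have "\<not> inj (\<lambda>j. (g ^^ j) y)" using fin finite_imageD infinite_UNIV_nat by blast
  then obtain i j where "i < j" "(g ^^ i) y = (g ^^ j) y"
    unfolding inj_def by (metis linorder_neqE_nat)
  then have "(g ^^ i) ((g ^^ (j - i)) y) = (g ^^ i) y"
    by (simp flip: o_apply[of "g ^^ i"] funpow_add)
  moreover have "(g ^^ (j - i)) y \<in> X" using bij_betw_apply[OF bij_betw_funpow[OF g] \<open>y \<in> X\<close>] .
  ultimately have "(g ^^ (j - i)) y = y"
    using bij_betw_imp_inj_on[OF bij_betw_funpow[OF g]] \<open>y \<in> X\<close> by (meson inj_onD)
  with \<open>i < j\<close> show ?thesis by (metis that zero_less_diff)
qed

lemma shadow_of_periodic_pseudo_orbit_in_Per: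
  assumes bij: "bij_betw f X X" and fin: "\<forall>x\<in>X. finite (dyn_cball X f c x)" and "2 * e \<le> c"
    and "y \<in> X" and shadow: "\<forall>k. dist (ziter X f k y) (xs k) < e"
    and "l > 0" and period: "\<forall>k j. xs (k + int (j * l)) = xs k"
  shows "y \<in> Per X f"
proof -
  have "dyn_cball X f (2 * e) y \<subseteq> dyn_cball X f c y"
    using \<open>2 * e \<le> c\<close> by (auto simp: dyn_cball_def intro: order_trans)
  then have "((f ^^ l) ^^ j) y \<in> dyn_cball X f c y" for j
    using shadow_of_periodic_in_dyn_cball[OF bij \<open>y \<in> X\<close> shadow, of "j * l"] period
    by (auto simp: funpow_mult mult.commute)
  then have "range (\<lambda>j. ((f ^^ l) ^^ j) y) \<subseteq> dyn_cball X f c y" by blast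
  then have "finite (range (\<lambda>j. ((f ^^ l) ^^ j) y))"
    using fin \<open>y \<in> X\<close> finite_subset by blast
  then obtain p where "p > 0" "((f ^^ l) ^^ p) y = y"
    using periodic_if_finite_orbit[OF bij_betw_funpow[OF bij] \<open>y \<in> X\<close>] by blast
  then have "l * p > 0" "(f ^^ (l * p)) y = y"
    using \<open>l > 0\<close> by (simp_all add: funpow_mult)
  with \<open>y \<in> X\<close> show ?thesis unfolding Per_def by blast
qed

lemma CR_subset_closure_Per:
  assumes bij: "bij_betw f X X" and "n_expansive X f n" and sh: "shadowing X f"
  shows "CR X f \<subseteq> closure (Per X f)"
proof
  fix x assume "x \<in> CR X f"
  obtain c where c: "c > 0" "\<forall>x\<in>X. finite (dyn_cball X f c x)"
    using n_expansive_finite_dyn_cball[OF assms(2)] by blast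
  have "\<exists>y\<in>Per X f. dist y x < \<epsilon>" if "\<epsilon> > 0" for \<epsilon>
  proof -
    define e where "e = min \<epsilon> (c / 2)"
    have "e > 0" using c \<open>\<epsilon> > 0\<close> by (simp add: e_def)
    then obtain d where "d > 0" and shadowed: "\<forall>xs::int \<Rightarrow> 'a.
        (\<forall>k. xs k \<in> X) \<and> (\<forall>k. dist (f (xs k)) (xs (k + 1)) < d) \<longrightarrow>
        (\<exists>y\<in>X. \<forall>k. dist (ziter X f k y) (xs k) < e)"
      using sh unfolding shadowing_def by blast
    have "pseudo_orbit_loop X f d x" using \<open>x \<in> CR X f\<close> \<open>d > 0\<close> CR_iff by blast
    then obtain l xs where "l > 0" "\<forall>k. xs k \<in> X" "\<forall>k. dist (f (xs k)) (xs (k + 1)) < d"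
      "xs 0 = x" and period: "\<forall>k j. xs (k + int (j * l)) = xs k"
      by (rule pseudo_orbit_loop_periodic_extension)
    with shadowed obtain y where "y \<in> X" and y: "\<forall>k. dist (ziter X f k y) (xs k) < e" by blast
    have "2 * e \<le> c" by (simp add: e_def)
    from shadow_of_periodic_pseudo_orbit_in_Per[OF bij c(2) this \<open>y \<in> X\<close> y \<open>l > 0\<close> period]
    have "y \<in> Per X f" .
    moreover have "dist y x < \<epsilon>"
      using y[rule_format, of 0] \<open>xs 0 = x\<close> by (simp add: ziter_def e_def)
    ultimately show ?thesis by blast
  qed
  then show "x \<in> closure (Per X f)" unfolding closure_approachable by blast
qed

theorem proposition2p3:
  fixes X :: "'a::metric_space set" and f :: "'a \<Rightarrow> 'a" and n :: nat
  assumes "compact X"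
    and "\<exists>g. homeomorphism X X f g"
    and "n_expansive X f n"
    and "shadowing X f"
  shows "CR X f = closure (Per X f)"
proof
  obtain g where h: "homeomorphism X X f g" using assms(2) by blast
  then have bij: "bij_betw f X X"
    unfolding homeomorphism_def by (metis bij_betw_byWitness order_refl)
  then show "CR X f \<subseteq> closure (Per X f)"
    using CR_subset_closure_Per assms(3,4) by blast
  have "closed (CR X f)"
    using closed_CR[OF compact_imp_closed[OF assms(1)] homeomorphism_cont1[OF h]] .
  with Per_subset_CR[OF bij_betw_imp_surj_on[OF bij, THEN equalityD1]]
  show "closure (Per X f) \<subseteq> CR X f" by (rule closure_minimal)
qed

end
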